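(* Let $\Delta^m$ be the last matrix produced by the Incremental Sweeping Algorithm applied to a connection matrix $\Delta\in\mathbb F^{m\times m}$. For every $j$, if the $j$-th column of $\Delta^m$ is nonzero then the $j$-th row of $\Delta^m$ is zero; equivalently $\Delta^m_{\cdot j}\,\Delta^m_{j\cdot}=0$ (outer product) for all $j$.
   Context: Throughout, $\mathbb F$ is a field and $m\ge1$. $A_{i\cdot}$, $A_{\cdot j}$ denote the $i$-th row and $j$-th column of a matrix $A$. $U^{pq}$ is the $m\times m$ matrix whose only nonzero entry is a $1$ in position $(p,q)$. Superscripts on matrices are indices, not powers. A connection matrix (over $\mathbb F$) is a matrix $\Delta\in\mathbb F^{m\times m}$ together with a partition $\{1,\dots,m\}=J_0\sqcup\cdots\sqcup J_b$ (the column/row partition; the $J_k$ need not consist of consecutive integers) such that $\Delta$ is upper triangular, $\Delta\Delta=0$, and $\Delta_{ij}=0$ unless $i<j$ and $(i,j)\in\bigcup_{k=1}^bJ_{k-1}\times J_k$. For $1\le r\le m-1$ the $r$-th diagonal is $\{(j-r,j):r<j\le m\}$. Incremental Sweeping Algorithm (ISA) applied to a connection matrix $\Delta$: set $\Delta^0=\Delta^1=\Delta$. For $r=1,\dots,m-1$ in turn: (Markup) for every position $(j-r,j)$ on the $r$-th diagonal with $\Delta^r_{j-r,j}\ne0$ such that no position in column $j$ was marked as a primary pivot at an earlier iteration: if some position $(j-r,p)$ of row $j-r$ was marked as a primary pivot at an earlier iteration, mark $(j-r,j)$ as a change-of-basis pivot of iteration $r$; otherwise mark $(j-r,j)$ permanently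 as a primary pivot. (Update) Let $T^r=I-\sum \frac{\Delta^r_{j-r,j}}{\Delta^r_{j-r,p}}U^{pj}$, the sum running over all change-of-basis pivots $(j-r,j)$ of iteration $r$, where $(j-r,p)$ is the primary pivot position in row $j-r$; set $\Delta^{r+1}=(T^r)^{-1}\Delta^rT^r$. *)

theory Defs
  imports "Jordan_Normal_Form.Matrix"
begin

text \<open>Matrices are m x m matrices of the Jordan_Normal_Form library; indices are
  0-based (index i here corresponds to index i+1 in the paper).\<close>

definition connection_matrix ::
  "nat \<Rightarrow> 'a::field mat \<Rightarrow> nat \<Rightarrow> (nat \<Rightarrow> nat set) \<Rightarrow> bool" where
  "connection_matrix m D b J \<longleftrightarrow>
     D \<in> carrier_mat m m \<and>
     (\<Union>k\<in>{0..b}. J k) = {..<m} \<and>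
     (\<forall>k\<in>{0..b}. \<forall>l\<in>{0..b}. k \<noteq> l \<longrightarrow> J k \<inter> J l = {}) \<and>
     (\<forall>i<m. \<forall>j<m. j < i \<longrightarrow> D $$ (i, j) = 0) \<and>
     D * D = 0\<^sub>m m m \<and>
     (\<forall>i<m. \<forall>j<m. D $$ (i, j) \<noteq> 0 \<longrightarrow>
        i < j \<and> (\<exists>k\<in>{1..b}. i \<in> J (k - 1) \<and> j \<in> J k))"

definition unit_mat :: "nat \<Rightarrow> nat \<Rightarrow> nat \<Rightarrow> 'a::field mat" where
  "unit_mat m p q = mat m m (\<lambda>(a, c). if a = p \<and> c = q then 1 else 0)"

definition inv_mat :: "nat \<Rightarrow> 'a::field mat \<Rightarrow> 'a mat" where
  "inv_mat m T = (THE S. S \<in> carrier_mat m m \<and> S * T = 1\<^sub>m m \<and> T * S = 1\<^sub>m m)"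

text \<open>Markup of iteration r, given the current matrix D = Delta^r and the set P of
  positions marked as primary pivots at earlier iterations.
  Change-of-basis pivots of iteration r:\<close>
definition cob_pivots :: "nat \<Rightarrow> nat \<Rightarrow> 'a::field mat \<Rightarrow> (nat \<times> nat) set \<Rightarrow> (nat \<times> nat) set" where
  "cob_pivots m r D P = {(j - r, j) | j. r \<le> j \<and> j < m \<and> D $$ (j - r, j) \<noteq> 0 \<and>
       (\<forall>i. (i, j) \<notin> P) \<and> (\<exists>p. (j - r, p) \<in> P)}"

definition new_primary :: "nat \<Rightarrow> nat \<Rightarrow> 'a::field mat \<Rightarrow> (nat \<times> nat) set \<Rightarrow> (nat \<times> nat) set" where
  "new_primary m r D P = {(j - r, j) | j. r \<le> j \<and> j < m \<and> D $$ (j - r, j) \<noteq> 0 \<and>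
       (\<forall>i. (i, j) \<notin> P) \<and> \<not> (\<exists>p. (j - r, p) \<in> P)}"

definition prim_col :: "(nat \<times> nat) set \<Rightarrow> nat \<Rightarrow> nat" where
  "prim_col P i = (THE p. (i, p) \<in> P)"

definition isa_T :: "nat \<Rightarrow> nat \<Rightarrow> 'a::field mat \<Rightarrow> (nat \<times> nat) set \<Rightarrow> 'a mat" where
  "isa_T m r D P = 1\<^sub>m m -
     mat m m (\<lambda>e. \<Sum>x\<in>cob_pivots m r D P.
        (D $$ x / D $$ (fst x, prim_col P (fst x))) * unit_mat m (prim_col P (fst x)) (snd x) $$ e)"

definition isa_step :: "nat \<Rightarrow> nat \<Rightarrow> 'a::field mat \<times> (nat \<times> nat) set \<Rightarrow> 'a mat \<times> (nat \<times> nat) set" where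
  "isa_step m r S = (let D = fst S; P = snd S; T = isa_T m r D P in
      (inv_mat m T * D * T, P \<union> new_primary m r D P))"

text \<open>isa_iter m D k = state after iterations 1..k; its first component is Delta^(k+1).\<close>
primrec isa_iter :: "nat \<Rightarrow> 'a::field mat \<Rightarrow> nat \<Rightarrow> 'a mat \<times> (nat \<times> nat) set" where
  "isa_iter m D 0 = (D, {})"
| "isa_iter m D (Suc k) = isa_step m (Suc k) (isa_iter m D k)"

text \<open>Delta^m, the last matrix produced by the ISA (after iterations r = 1..m-1).\<close>
definition isa_final :: "nat \<Rightarrow> 'a::field mat \<Rightarrow> 'a mat" where
  "isa_final m D = fst (isa_iter m D (m - 1))"

end

theory Submission
  imports Defs
begin

text \<open>
  The ISA maintains a set P of primary pivots.  After iteration r the current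
  matrix D satisfies D * D = 0 and the following invariant (isa_invariant): every pivot
  (i, p) has a nonzero entry D(i, p), the pivot column p vanishes strictly below row i,
  each row carries at most one pivot, pivots lie within the first r diagonals, and every
  column without a pivot vanishes on and below its r-th diagonal.  One iteration
  conjugates D by T = 1 - N, where N records the change-of-basis pivots; N * N = 0, so
  T has inverse 1 + N.  The right factor T is a column operation clearing the
  change-of-basis columns from their pivot row downwards, the left factor 1 + N adds
  lower rows to upper rows and so preserves all zeros below pivots.
  After m - 1 iterations every column without a pivot is zero.  The theorem then follows
  from a general fact (pivot_rows_vanish): for a matrix with D * D = 0 and such a pivot
  structure, the row indexed by a pivot column is zero, since otherwise the product of
  the lowest pivot row meeting it with the corresponding column has exactly one
  nonzero term.
\<close>

lemma mat_mult_entry: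
  fixes A B :: "'a::semiring_0 mat"
  assumes "A \<in> carrier_mat n k" "B \<in> carrier_mat k l" "i < n" "j < l"
  shows "(A * B) $$ (i, j) = (\<Sum>t<k. A $$ (i, t) * B $$ (t, j))"
  using assms by (simp add: scalar_prod_def atLeast0LessThan)

lemma sum_eq_single:
  assumes "finite S" "s \<in> S" "\<And>t. t \<in> S \<Longrightarrow> t \<noteq> s \<Longrightarrow> f t = 0"
  shows "sum f S = f s"
  using assms sum.mono_neutral_right[of S "{s}" f] by auto

lemma inv_mat_eqI:
  fixes S T :: "'a::field mat"
  assumes S: "S \<in> carrier_mat m m" and T: "T \<in> carrier_mat m m"
    and "S * T = 1\<^sub>m m" and TS: "T * S = 1\<^sub>m m"
  shows "inv_mat m T = S"
  unfolding inv_mat_def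
proof (rule the_equality)
  fix S' :: "'a mat"
  assume S': "S' \<in> carrier_mat m m \<and> S' * T = 1\<^sub>m m \<and> T * S' = 1\<^sub>m m"
  have "S' = S' * (T * S)" using S' TS right_mult_one_mat[of S' m m] by auto
  also have "\<dots> = (S' * T) * S" using S' S T by (subst assoc_mult_mat) auto
  also have "\<dots> = S" using S' S by simp
  finally show "S' = S" .
qed (use assms in blast)

lemma unipotent_inverse:
  fixes N :: "'a::ring_1 mat"
  assumes N: "N \<in> carrier_mat m m" and NN: "N * N = 0\<^sub>m m m"
  shows "(1\<^sub>m m + N) * (1\<^sub>m m - N) = 1\<^sub>m m" "(1\<^sub>m m - N) * (1\<^sub>m m + N) = 1\<^sub>m m"
proof -
  have "(1\<^sub>m m + N) * (1\<^sub>m m - N) = 1\<^sub>m m * (1\<^sub>m m - N) + N * (1\<^sub>m m - N)"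
    using N by (intro add_mult_distrib_mat) auto
  also have "N * (1\<^sub>m m - N) = N * 1\<^sub>m m - N * N"
    using N by (intro mult_minus_distrib_mat) auto
  finally show "(1\<^sub>m m + N) * (1\<^sub>m m - N) = 1\<^sub>m m" using N NN by (intro eq_matI) auto
  have "(1\<^sub>m m - N) * (1\<^sub>m m + N) = 1\<^sub>m m * (1\<^sub>m m + N) - N * (1\<^sub>m m + N)"
    using N by (intro minus_mult_distrib_mat) auto
  also have "N * (1\<^sub>m m + N) = N * 1\<^sub>m m + N * N"
    using N by (intro mult_add_distrib_mat) auto
  finally show "(1\<^sub>m m - N) * (1\<^sub>m m + N) = 1\<^sub>m m" using N NN by (intro eq_matI) auto
qed

lemma inv_mat_one_minus_square_zero:
  fixes N :: "'a::field mat"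
  assumes N: "N \<in> carrier_mat m m" and NN: "N * N = 0\<^sub>m m m"
  shows "inv_mat m (1\<^sub>m m - N) = 1\<^sub>m m + N"
  using unipotent_inverse[OF assms] N by (intro inv_mat_eqI) auto

text \<open>Conjugation preserves D * D = 0, stated for the product shape S * (D * T).\<close>
lemma similar_square_zero:
  fixes D S T :: "'a::semiring_1 mat"
  assumes D: "D \<in> carrier_mat m m" and S: "S \<in> carrier_mat m m" and T: "T \<in> carrier_mat m m"
    and TS: "T * S = 1\<^sub>m m" and DD: "D * D = 0\<^sub>m m m"
  shows "(S * (D * T)) * (S * (D * T)) = 0\<^sub>m m m"
proof -
  define X where "X = D * T"
  have X: "X \<in> carrier_mat m m" unfolding X_def using D T by simp
  have "X * S = D" unfolding X_def using D T S TS by simp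
  then have "X * (S * X) = D * X" using X S by (simp flip: assoc_mult_mat)
  also have "\<dots> = 0\<^sub>m m m" unfolding X_def using D T DD by (simp flip: assoc_mult_mat)
  finally show ?thesis unfolding X_def[symmetric] using S X by (subst assoc_mult_mat[of S m m X m]) auto
qed

lemma unipotent_row_op_entry:
  fixes N E :: "'a::semiring_1 mat"
  assumes N: "N \<in> carrier_mat m m" and E: "E \<in> carrier_mat m m"
    and upper: "\<And>a t. a < m \<Longrightarrow> t < m \<Longrightarrow> N $$ (a, t) \<noteq> 0 \<Longrightarrow> a < t"
    and ak: "a < m" "k < m"
    and below: "\<And>t. t < m \<Longrightarrow> a < t \<Longrightarrow> E $$ (t, k) = 0"
  shows "((1\<^sub>m m + N) * E) $$ (a, k) = E $$ (a, k)"
proof -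
  have "(N * E) $$ (a, k) = (\<Sum>t<m. N $$ (a, t) * E $$ (t, k))"
    by (rule mat_mult_entry[OF N E ak])
  also have "\<dots> = 0"
    using upper below ak by (intro sum.neutral) force
  finally have "(N * E) $$ (a, k) = 0" .
  moreover have "(1\<^sub>m m + N) * E = 1\<^sub>m m * E + N * E"
    using N E by (intro add_mult_distrib_mat) auto
  ultimately show ?thesis using N E ak by simp
qed

lemma column_op_entry:
  fixes D N :: "'a::ring_1 mat"
  assumes D: "D \<in> carrier_mat m m" and N: "N \<in> carrier_mat m m"
    and ak: "a < m" "k < m" and q: "q < m"
    and single: "\<And>t. t < m \<Longrightarrow> t \<noteq> q \<Longrightarrow> N $$ (t, k) = 0"
  shows "(D * (1\<^sub>m m - N)) $$ (a, k) = D $$ (a, k) - D $$ (a, q) * N $$ (q, k)"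
proof -
  have "(D * N) $$ (a, k) = (\<Sum>t<m. D $$ (a, t) * N $$ (t, k))"
    by (rule mat_mult_entry[OF D N ak])
  also have "\<dots> = D $$ (a, q) * N $$ (q, k)"
    using single q by (intro sum_eq_single) auto
  finally have "(D * N) $$ (a, k) = D $$ (a, q) * N $$ (q, k)" .
  moreover have "D * (1\<^sub>m m - N) = D * 1\<^sub>m m - D * N"
    using D N by (intro mult_minus_distrib_mat) auto
  ultimately show ?thesis using D N ak by simp
qed

definition pivot_set :: "nat \<Rightarrow> 'a::zero mat \<Rightarrow> (nat \<times> nat) set \<Rightarrow> bool" where
  "pivot_set m D P \<longleftrightarrow>
     (\<forall>i p. (i, p) \<in> P \<longrightarrow> i < p \<and> p < m \<and> D $$ (i, p) \<noteq> 0 \<and>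
        (\<forall>a. i < a \<longrightarrow> a < m \<longrightarrow> D $$ (a, p) = 0)) \<and>
     (\<forall>i p q. (i, p) \<in> P \<longrightarrow> (i, q) \<in> P \<longrightarrow> p = q)"

lemma pivot_rows_vanish:
  fixes D :: "'a::{semiring_0, semiring_no_zero_divisors} mat"
  assumes D: "D \<in> carrier_mat m m" and DD: "D * D = 0\<^sub>m m m" and piv: "pivot_set m D P"
    and nonpivot_zero: "\<And>a j. a < m \<Longrightarrow> j < m \<Longrightarrow> \<forall>i. (i, j) \<notin> P \<Longrightarrow> D $$ (a, j) = 0"
    and ij: "(i, j) \<in> P" and k: "k < m"
  shows "D $$ (j, k) = 0"
proof (rule ccontr)
  assume jk: "D $$ (j, k) \<noteq> 0"
  have P_bounds: "l < t \<and> t < m" and P_nonzero: "D $$ (l, t) \<noteq> 0"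
    and P_below: "\<And>a. l < a \<Longrightarrow> a < m \<Longrightarrow> D $$ (a, t) = 0" if "(l, t) \<in> P" for l t
    using piv that unfolding pivot_set_def by blast+
  have P_row_unique: "t = t'" if "(l, t) \<in> P" "(l, t') \<in> P" for l t t'
    using piv that unfolding pivot_set_def by blast
  text \<open>Among the pivots (l, t) with D(t, k) nonzero, pick one with the lowest pivot row l.\<close>
  define S where "S = {x \<in> P. D $$ (snd x, k) \<noteq> 0}"
  have "S \<subseteq> {..<m} \<times> {..<m}" unfolding S_def using P_bounds by force
  then have S_fin: "finite S" by (rule finite_subset) auto
  have "(i, j) \<in> S" unfolding S_def using ij jk by simp
  then have "Max (fst ` S) \<in> fst ` S" using S_fin by (intro Max_in) auto
  then obtain l0 t0 where l0t0: "(l0, t0) \<in> S" and l0_def: "l0 = Max (fst ` S)" by force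
  have l0_max: "l \<le> l0" if "(l, t) \<in> S" for l t
    unfolding l0_def using S_fin that by (intro Max_ge) force+
  have t0: "(l0, t0) \<in> P" "D $$ (t0, k) \<noteq> 0" using l0t0 unfolding S_def by auto
  have l0m: "l0 < m" and t0m: "t0 < m" using P_bounds[OF t0(1)] by auto
  text \<open>Row l0 of D then meets column k of D in exactly one nonzero product.\<close>
  have other_terms: "D $$ (l0, t) * D $$ (t, k) = 0" if "t < m" "t \<noteq> t0" for t
  proof (cases "D $$ (t, k) = 0")
    case False
    show ?thesis
    proof (cases "\<exists>l. (l, t) \<in> P")
      case True
      then obtain l where lt: "(l, t) \<in> P" by blast
      then have "l \<le> l0" using False l0_max unfolding S_def by auto
      moreover have "l \<noteq> l0" using P_row_unique lt t0(1) that(2) by blast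
      ultimately show ?thesis using P_below[OF lt] l0m by simp
    next
      case False
      then show ?thesis using nonpivot_zero[OF l0m that(1)] by simp
    qed
  qed simp
  have "(D * D) $$ (l0, k) = (\<Sum>t<m. D $$ (l0, t) * D $$ (t, k))"
    by (rule mat_mult_entry[OF D D l0m k])
  also have "\<dots> = D $$ (l0, t0) * D $$ (t0, k)"
    using other_terms t0m by (intro sum_eq_single) auto
  finally have "(D * D) $$ (l0, k) \<noteq> 0" using P_nonzero[OF t0(1)] t0(2) by simp
  then show False using DD l0m k by simp
qed

definition isa_invariant :: "nat \<Rightarrow> nat \<Rightarrow> 'a::field mat \<Rightarrow> (nat \<times> nat) set \<Rightarrow> bool" where
  "isa_invariant m r D P \<longleftrightarrow>
     D \<in> carrier_mat m m \<and> D * D = 0\<^sub>m m m \<and> pivot_set m D P \<and>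
     (\<forall>i p. (i, p) \<in> P \<longrightarrow> p \<le> i + r) \<and>
     (\<forall>a j. a < m \<longrightarrow> j < m \<longrightarrow> (\<forall>i. (i, j) \<notin> P) \<longrightarrow> j \<le> a + r \<longrightarrow> D $$ (a, j) = 0)"

lemma isa_invariant_init:
  fixes D :: "'a::field mat"
  assumes "D \<in> carrier_mat m m" "D * D = 0\<^sub>m m m"
    and "\<And>i j. i < m \<Longrightarrow> j < m \<Longrightarrow> D $$ (i, j) \<noteq> 0 \<Longrightarrow> i < j"
  shows "isa_invariant m 0 D {}"
  using assms unfolding isa_invariant_def pivot_set_def by force

lemma isa_invariant_final_columns:
  assumes "isa_invariant m (m - 1) D P" "a < m" "j < m" "\<forall>i. (i, j) \<notin> P"
  shows "D $$ (a, j) = 0"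
  using assms unfolding isa_invariant_def by auto

lemma prim_col_eq:
  assumes "(i, q) \<in> P" "\<And>p q. (i, p) \<in> P \<Longrightarrow> (i, q) \<in> P \<Longrightarrow> p = q"
  shows "prim_col P i = q"
  unfolding prim_col_def using assms by (intro the_equality) auto

text \<open>One iteration r + 1 of the ISA, applied to a state (D, P) satisfying the invariant for r.\<close>
locale isa_sweep =
  fixes m r :: nat and D :: "'a::field mat" and P :: "(nat \<times> nat) set"
  assumes invariant: "isa_invariant m r D P"
begin

lemma D_carrier: "D \<in> carrier_mat m m"
  and D_square_zero: "D * D = 0\<^sub>m m m"
  using invariant unfolding isa_invariant_def by blast+

lemma pivot_bounds: "(i, p) \<in> P \<Longrightarrow> i < p \<and> p < m \<and> p \<le> i + r"
  and pivot_nonzero: "(i, p) \<in> P \<Longrightarrow> D $$ (i, p) \<noteq> 0"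
  and pivot_below: "(i, p) \<in> P \<Longrightarrow> i < a \<Longrightarrow> a < m \<Longrightarrow> D $$ (a, p) = 0"
  and pivot_row_unique: "(i, p) \<in> P \<Longrightarrow> (i, q) \<in> P \<Longrightarrow> p = q"
  using invariant unfolding isa_invariant_def pivot_set_def by blast+

lemma nonpivot_zero:
  "a < m \<Longrightarrow> j < m \<Longrightarrow> \<forall>i. (i, j) \<notin> P \<Longrightarrow> j \<le> a + r \<Longrightarrow> D $$ (a, j) = 0"
  using invariant unfolding isa_invariant_def by blast

abbreviation cob :: "(nat \<times> nat) set" where
  "cob \<equiv> cob_pivots m (Suc r) D P"

abbreviation new :: "(nat \<times> nat) set" where
  "new \<equiv> new_primary m (Suc r) D P"

lemma cob_iff: "(i, j) \<in> cob \<longleftrightarrow> Suc r \<le> j \<and> j < m \<and> i = j - Suc r \<and> D $$ (i, j) \<noteq> 0 \<and>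
    (\<forall>i'. (i', j) \<notin> P) \<and> (\<exists>p. (i, p) \<in> P)"
  unfolding cob_pivots_def by auto

lemma new_iff: "(i, j) \<in> new \<longleftrightarrow> Suc r \<le> j \<and> j < m \<and> i = j - Suc r \<and> D $$ (i, j) \<noteq> 0 \<and>
    (\<forall>i'. (i', j) \<notin> P) \<and> \<not> (\<exists>p. (i, p) \<in> P)"
  unfolding new_primary_def by auto

lemma cob_primary:
  assumes "(i, j) \<in> cob"
  shows "(i, prim_col P i) \<in> P" "prim_col P i < j"
proof -
  obtain p where p: "(i, p) \<in> P" using assms cob_iff by blast
  then have "prim_col P i = p" using pivot_row_unique by (intro prim_col_eq) auto
  then show "(i, prim_col P i) \<in> P" "prim_col P i < j"
    using p pivot_bounds[OF p] assms cob_iff by auto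
qed

definition sweep_mat :: "'a mat" where
  "sweep_mat = mat m m (\<lambda>e. \<Sum>x\<in>cob.
     (D $$ x / D $$ (fst x, prim_col P (fst x))) * unit_mat m (prim_col P (fst x)) (snd x) $$ e)"

lemma sweep_mat_carrier: "sweep_mat \<in> carrier_mat m m"
  unfolding sweep_mat_def by simp

lemma sweep_mat_entry:
  assumes ab: "a < m" "b < m"
  shows "sweep_mat $$ (a, b) = (if (b - Suc r, b) \<in> cob \<and> a = prim_col P (b - Suc r)
      then D $$ (b - Suc r, b) / D $$ (b - Suc r, prim_col P (b - Suc r)) else 0)"
    (is "_ = ?entry")
proof -
  have fin: "finite cob"
    by (rule finite_subset[of _ "(\<lambda>j. (j - Suc r, j)) ` {..<m}"]) (auto simp: cob_iff)
  have "sweep_mat $$ (a, b) = (\<Sum>x\<in>cob. (D $$ x / D $$ (fst x, prim_col P (fst x))) *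
      (if a = prim_col P (fst x) \<and> b = snd x then 1 else 0))"
    unfolding sweep_mat_def unit_mat_def using ab by simp
  also have "\<dots> = (\<Sum>x\<in>cob. if x = (b - Suc r, b) then ?entry else 0)"
  proof (rule sum.cong)
    fix x assume "x \<in> cob"
    then obtain i j where "x = (i, j)" "(i, j) \<in> cob" by (cases x) auto
    then show "(D $$ x / D $$ (fst x, prim_col P (fst x))) *
        (if a = prim_col P (fst x) \<and> b = snd x then 1 else 0) =
        (if x = (b - Suc r, b) then ?entry else 0)"
      using cob_iff[of i j] by auto
  qed simp
  also have "\<dots> = ?entry" using fin by (simp add: sum.delta)
  finally show ?thesis .
qed

lemma sweep_mat_nonzero:
  assumes "a < m" "b < m" "sweep_mat $$ (a, b) \<noteq> 0"
  shows "(b - Suc r, b) \<in> cob" "a = prim_col P (b - Suc r)"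
  using sweep_mat_entry[OF assms(1,2)] assms(3) by (auto split: if_splits)

text \<open>Rows of nonzero entries of sweep_mat are pivot columns, their columns are not.\<close>
lemma sweep_mat_square_zero: "sweep_mat * sweep_mat = 0\<^sub>m m m"
proof (rule eq_matI)
  fix a b assume "a < dim_row (0\<^sub>m m m :: 'a mat)" "b < dim_col (0\<^sub>m m m :: 'a mat)"
  then have ab: "a < m" "b < m" by auto
  have "sweep_mat $$ (a, t) * sweep_mat $$ (t, b) = 0" if t: "t < m" for t
  proof (rule ccontr)
    assume "sweep_mat $$ (a, t) * sweep_mat $$ (t, b) \<noteq> 0"
    then have "(t - Suc r, t) \<in> cob" "(b - Suc r, b) \<in> cob" "t = prim_col P (b - Suc r)"
      using sweep_mat_nonzero ab t by auto
    then show False using cob_primary(1)[of "b - Suc r" b] cob_iff[of "t - Suc r" t] by auto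
  qed
  then have "(\<Sum>t<m. sweep_mat $$ (a, t) * sweep_mat $$ (t, b)) = 0" by (intro sum.neutral) auto
  then show "(sweep_mat * sweep_mat) $$ (a, b) = 0\<^sub>m m m $$ (a, b)"
    using mat_mult_entry[OF sweep_mat_carrier sweep_mat_carrier ab] ab by simp
qed (simp_all add: sweep_mat_def)

lemma sweep_mat_upper: "a < m \<Longrightarrow> b < m \<Longrightarrow> sweep_mat $$ (a, b) \<noteq> 0 \<Longrightarrow> a < b"
  using sweep_mat_nonzero[of a b] cob_primary(2)[of "b - Suc r" b] by auto

definition swept :: "'a mat" where
  "swept = D * (1\<^sub>m m - sweep_mat)"

abbreviation next_mat :: "'a mat" where
  "next_mat \<equiv> (1\<^sub>m m + sweep_mat) * swept"

lemma swept_carrier: "swept \<in> carrier_mat m m"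
  unfolding swept_def using D_carrier sweep_mat_carrier by (intro mult_carrier_mat) auto

lemma isa_step_eq:
  "isa_step m (Suc r) (D, P) = (next_mat, P \<union> new)"
proof -
  have "isa_T m (Suc r) D P = 1\<^sub>m m - sweep_mat"
    unfolding isa_T_def sweep_mat_def ..
  moreover have "inv_mat m (1\<^sub>m m - sweep_mat) = 1\<^sub>m m + sweep_mat"
    by (rule inv_mat_one_minus_square_zero[OF sweep_mat_carrier sweep_mat_square_zero])
  moreover have "(1\<^sub>m m + sweep_mat) * D * (1\<^sub>m m - sweep_mat) = next_mat"
    unfolding swept_def by (rule assoc_mult_mat) (use D_carrier sweep_mat_carrier in auto)
  ultimately show ?thesis unfolding isa_step_def Let_def by simp
qed

lemma swept_entry_noncob:
  assumes "a < m" "k < m" "(k - Suc r, k) \<notin> cob"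
  shows "swept $$ (a, k) = D $$ (a, k)"
proof -
  have "\<And>t. t < m \<Longrightarrow> sweep_mat $$ (t, k) = 0"
    using sweep_mat_nonzero assms by blast
  then show ?thesis
    unfolding swept_def using column_op_entry[OF D_carrier sweep_mat_carrier assms(1,2,2)] assms
    by simp
qed

lemma swept_cob_column_cleared:
  assumes cob: "(k - Suc r, k) \<in> cob" and t: "t < m" "k - Suc r \<le> t"
  shows "swept $$ (t, k) = 0"
proof -
  define i where "i = k - Suc r"
  define q where "q = prim_col P i"
  have iq: "(i, q) \<in> P" "q < m" unfolding q_def i_def using cob_primary[OF cob] pivot_bounds by auto
  have k: "k < m" "Suc r \<le> k" "\<forall>i'. (i', k) \<notin> P" using cob cob_iff by auto
  have "\<And>t. t < m \<Longrightarrow> t \<noteq> q \<Longrightarrow> sweep_mat $$ (t, k) = 0"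
    using sweep_mat_nonzero k(1) unfolding q_def i_def by blast
  then have "swept $$ (t, k) = D $$ (t, k) - D $$ (t, q) * sweep_mat $$ (q, k)"
    unfolding swept_def by (intro column_op_entry[OF D_carrier sweep_mat_carrier t(1) k(1) iq(2)])
  also have "\<dots> = D $$ (t, k) - D $$ (t, q) * (D $$ (i, k) / D $$ (i, q))"
    using sweep_mat_entry[OF iq(2) k(1)] cob unfolding q_def i_def by simp
  also have "\<dots> = 0"
  proof (cases "t = i")
    case True
    then show ?thesis using pivot_nonzero[OF iq(1)] by simp
  next
    case False
    then have "i < t" using t unfolding i_def by simp
    then show ?thesis
      using pivot_below[OF iq(1) _ t(1)] nonpivot_zero[OF t(1) k(1,3)] k(2) unfolding i_def by simp
  qed
  finally show ?thesis .
qed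

text \<open>The row operation by 1 + sweep_mat only adds lower rows to upper ones, so it fixes every
  entry of swept below which the column vanishes.\<close>
lemma next_entry:
  assumes "a < m" "k < m" "\<And>t. t < m \<Longrightarrow> a < t \<Longrightarrow> swept $$ (t, k) = 0"
  shows "next_mat $$ (a, k) = swept $$ (a, k)"
  using unipotent_row_op_entry[OF sweep_mat_carrier swept_carrier sweep_mat_upper assms] .

lemma next_pivot_old_props:
  assumes "(i, p) \<in> P \<union> new"
  shows "i < p \<and> p < m \<and> p \<le> i + Suc r \<and> (p - Suc r, p) \<notin> cob \<and> D $$ (i, p) \<noteq> 0 \<and>
    (\<forall>a. i < a \<longrightarrow> a < m \<longrightarrow> D $$ (a, p) = 0)"
proof (cases "(i, p) \<in> P")
  case True
  then have "(p - Suc r, p) \<notin> cob" using cob_iff[of "p - Suc r" p] by blast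
  with True show ?thesis
    using pivot_bounds[OF True] pivot_nonzero[OF True] pivot_below[OF True] by auto
next
  case False
  then have "(i, p) \<in> new" using assms by blast
  then have p: "Suc r \<le> p" "p < m" "i = p - Suc r" "D $$ (i, p) \<noteq> 0" "\<forall>i'. (i', p) \<notin> P"
      "\<not> (\<exists>q. (i, q) \<in> P)"
    using new_iff[of i p] by blast+
  have "D $$ (a, p) = 0" if "i < a" "a < m" for a
    using nonpivot_zero[OF that(2) p(2) p(5)] that(1) p(3) by simp
  moreover have "(p - Suc r, p) \<notin> cob" using p(3,6) cob_iff[of "p - Suc r" p] by blast
  ultimately show ?thesis using p by auto
qed

text \<open>Pivot columns are not touched by the column operation, and the row operation does not
  change them from the pivot row downwards.\<close>
lemma next_pivot_column:
  assumes ip: "(i, p) \<in> P \<union> new" and a: "a < m" "i \<le> a"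
  shows "next_mat $$ (a, p) = D $$ (a, p)"
proof -
  have props: "p < m" "(p - Suc r, p) \<notin> cob" "\<forall>a. i < a \<longrightarrow> a < m \<longrightarrow> D $$ (a, p) = 0"
    using next_pivot_old_props[OF ip] by auto
  have col: "swept $$ (t, p) = D $$ (t, p)" if "t < m" for t
    using swept_entry_noncob[OF that props(1,2)] .
  show ?thesis
    using next_entry[OF a(1) props(1)] col a props(3) by simp
qed

lemma next_pivot_set: "pivot_set m next_mat (P \<union> new)"
proof -
  have "p = q" if "(i, p) \<in> P \<union> new" "(i, q) \<in> P \<union> new" for i p q
    using that pivot_row_unique new_iff[of i p] new_iff[of i q] by auto
  moreover have "i < p \<and> p < m \<and> next_mat $$ (i, p) \<noteq> 0 \<and>
      (\<forall>a. i < a \<longrightarrow> a < m \<longrightarrow> next_mat $$ (a, p) = 0)"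
    if ip: "(i, p) \<in> P \<union> new" for i p
    using next_pivot_old_props[OF ip] next_pivot_column[OF ip] by auto
  ultimately show ?thesis unfolding pivot_set_def by simp
qed

lemma swept_nonpivot_column:
  assumes j: "j < m" "\<forall>i. (i, j) \<notin> P \<union> new" and t: "t < m" "j \<le> t + Suc r"
  shows "swept $$ (t, j) = 0"
proof (cases "(j - Suc r, j) \<in> cob")
  case True
  then show ?thesis using swept_cob_column_cleared t by simp
next
  case noncob: False
  have "D $$ (t, j) = 0"
  proof (cases "j \<le> t + r")
    case True
    then show ?thesis using nonpivot_zero t(1) j by blast
  next
    case False
    then have "t = j - Suc r" "Suc r \<le> j" using t by auto
    then show ?thesis using noncob j cob_iff[of t j] new_iff[of t j] by blast
  qed
  then show ?thesis using swept_entry_noncob[OF t(1) j(1) noncob] by simp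
qed

lemma next_nonpivot_column:
  assumes "j < m" "\<forall>i. (i, j) \<notin> P \<union> new" "a < m" "j \<le> a + Suc r"
  shows "next_mat $$ (a, j) = 0"
  using next_entry[of a j] swept_nonpivot_column assms by simp

lemma next_invariant:
  "isa_invariant m (Suc r) (fst (isa_step m (Suc r) (D, P))) (snd (isa_step m (Suc r) (D, P)))"
proof -
  have "next_mat \<in> carrier_mat m m"
    using sweep_mat_carrier swept_carrier by (meson add_carrier_mat mult_carrier_mat one_carrier_mat)
  moreover have "next_mat * next_mat = 0\<^sub>m m m"
    unfolding swept_def
    by (rule similar_square_zero[OF D_carrier _ _ _ D_square_zero])
      (use sweep_mat_carrier unipotent_inverse(2)[OF sweep_mat_carrier sweep_mat_square_zero]
        in auto)
  moreover have "\<forall>i p. (i, p) \<in> P \<union> new \<longrightarrow> p \<le> i + Suc r"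
    using next_pivot_old_props by blast
  moreover have "\<forall>a j. a < m \<longrightarrow> j < m \<longrightarrow> (\<forall>i. (i, j) \<notin> P \<union> new) \<longrightarrow>
      j \<le> a + Suc r \<longrightarrow> next_mat $$ (a, j) = 0"
    using next_nonpivot_column by blast
  ultimately show ?thesis
    unfolding isa_step_eq isa_invariant_def using next_pivot_set by simp
qed

end

lemma isa_iter_invariant:
  fixes D :: "'a::field mat"
  assumes "isa_invariant m 0 D {}"
  shows "isa_invariant m k (fst (isa_iter m D k)) (snd (isa_iter m D k))"
proof (induction k)
  case 0
  then show ?case using assms by simp
next
  case (Suc k)
  interpret isa_sweep m k "fst (isa_iter m D k)" "snd (isa_iter m D k)"
    by (rule isa_sweep.intro[OF Suc.IH])
  show ?case using next_invariant by simp
qed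

lemma isa_final_invariant:
  fixes D :: "'a::field mat"
  assumes "connection_matrix m D b J"
  shows "isa_invariant m (m - 1) (isa_final m D) (snd (isa_iter m D (m - 1)))"
proof -
  have "D \<in> carrier_mat m m \<and> D * D = 0\<^sub>m m m \<and> (\<forall>i<m. \<forall>j<m. D $$ (i, j) \<noteq> 0 \<longrightarrow> i < j)"
    using assms unfolding connection_matrix_def by blast
  then have "isa_invariant m 0 D {}" by (intro isa_invariant_init) auto
  then show ?thesis unfolding isa_final_def by (rule isa_iter_invariant)
qed

theorem mainTheorem4:
  fixes D :: "'a::field mat" and m b :: nat and J :: "nat \<Rightarrow> nat set"
  assumes "m \<ge> 1"
    and "connection_matrix m D b J"
  shows "\<forall>j<m. col (isa_final m D) j \<noteq> 0\<^sub>v m \<longrightarrow> row (isa_final m D) j = 0\<^sub>v m"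
proof (intro allI impI)
  fix j assume j: "j < m" and col_nonzero: "col (isa_final m D) j \<noteq> 0\<^sub>v m"
  define E where "E = isa_final m D"
  define P where "P = snd (isa_iter m D (m - 1))"
  have inv: "isa_invariant m (m - 1) E P"
    unfolding E_def P_def by (rule isa_final_invariant[OF assms(2)])
  then have E: "E \<in> carrier_mat m m" "E * E = 0\<^sub>m m m" "pivot_set m E P"
    unfolding isa_invariant_def by blast+
  note nonpivot_zero = isa_invariant_final_columns[OF inv]
  have "\<exists>i. (i, j) \<in> P"
  proof (rule ccontr)
    assume "\<nexists>i. (i, j) \<in> P"
    then have "\<And>a. a < m \<Longrightarrow> E $$ (a, j) = 0" using j nonpivot_zero by blast
    then have "col E j = 0\<^sub>v m" using E(1) j by (intro eq_vecI) auto
    then show False using col_nonzero unfolding E_def by simp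
  qed
  then obtain i where ij: "(i, j) \<in> P" by blast
  have "\<And>k. k < m \<Longrightarrow> E $$ (j, k) = 0"
    using pivot_rows_vanish[OF E nonpivot_zero ij] .
  then have "row E j = 0\<^sub>v m" using E(1) j by (intro eq_vecI) simp_all
  then show "row (isa_final m D) j = 0\<^sub>v m" unfolding E_def .
qed

end
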